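(* Assume the setting in the context, with $X_A,X_B$ independent conditional on $Y$. Consider the optimization problem of maximizing $MIG^f(h_A,h_B,\mathbf{p})$ over all $h_A:\Sigma_A\to\Delta_\Sigma$, $h_B:\Sigma_B\to\Delta_\Sigma$ and $\mathbf{p}\in\Delta_\Sigma$ with all entries positive. Then: (1) (Solution $\to$ maximizer) For every random variable $Z$ with values in $\Sigma$, jointly distributed with $(X_A,X_B)$ (with $(X_A,X_B)$ having its given distribution), such that $\Pr[Z=y]>0$ for all $y$ and $X_A,X_B$ are independent conditional on $Z$, the triple $h_A^*(x_A):=(\Pr[Z=y\mid X_A=x_A])_{y\in\Sigma}$, $h_B^*(x_B):=(\Pr[Z=y\mid X_B=x_B])_{y\in\Sigma}$, $\mathbf{p}^*:=(\Pr[Z=y])_{y\in\Sigma}$ is a maximizer, and the maximum value equals $MI^f(X_A;X_B)$. (In particular this holds for $Z=Y$.) (2) (Maximizer $\to$ permuted ground truth) If moreover the prior is well-defined, $f$ is differentiable and $f'$ is injective, then for every maximizer $(h_A^*,h_B^*,\mathbf{p}^* )$ there is a permutation $\pi$ of $\Sigma$ such that $h_A^*(x_A)=(\Pr[\pi(Y)=y\mid X_A=x_A])_y$ for all $x_A$, $h_B^*(x_B)=(\Pr[\pi(Y)=y\mid X_B=x_B])_y$ for all $x_B$, and $\mathbf{p}^*=(\Pr[\pi(Y)=y])_y$.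
   Context: Let $\Sigma_A,\Sigma_B,\Sigma$ be finite nonempty sets and $(X_A,X_B,Y)$ random variables with values in $\Sigma_A\times\Sigma_B\times\Sigma$ (joint law called the prior), with $\Pr[X_A=x_A]>0$, $\Pr[X_B=x_B]>0$, $\Pr[Y=y]>0$ for all values. $\Delta_\Sigma$ is the set of probability vectors on $\Sigma$. $K(x_A,x_B):=\frac{\Pr[X_A=x_A,X_B=x_B]}{\Pr[X_A=x_A]\Pr[X_B=x_B]}$. Let $f:[0,\infty)\to\mathbb{R}$ be convex with $f(1)=0$, $f^\star(u):=\sup_{t\ge0}(tu-f(t))$, $\partial f$ its subdifferential, and $MI^f(X_A;X_B):=\sum_{x_A,x_B}\Pr[X_A=x_A]\Pr[X_B=x_B]f(K(x_A,x_B))$. Fix a selection $g$ with $g(t)\in\partial f(t)$ for all $t$ (take $g=f'$ if $f$ is differentiable), and define the reward $R^f(\mathbf{p}_1,\mathbf{p}_2,\mathbf{p}):=g\big(\sum_{y}\mathbf{p}_1(y)\mathbf{p}_2(y)/\mathbf{p}(y)\big)$. The objective is $$MIG^f(h_A,h_B,\mathbf{p}):=\sum_{x_A,x_B}\Pr[X_A=x_A,X_B=x_B]\,R^f(h_A(x_A),h_B(x_B),\mathbf{p})-\sum_{x_A,x_B}\Pr[X_A=x_A]\Pr[X_B=x_B]\,f^\star\big(R^f(h_A(x_A),h_B(x_B),\mathbf{p})\big),$$ which is the expectation of the empirical $f$-mutual information gain (same-task average of $R^f$ minus distinct-task-pair average of $f^\star(R^f)$) over i.i.d. task samples. For a permutation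 $\pi$ of $\Sigma$, $\pi(Y)$ is the relabeled variable. Well-defined prior: consider the system, in unknowns $\mathbf{a}^{x_A}\in\Delta_\Sigma$ ($x_A\in\Sigma_A$), $\mathbf{b}^{x_B}\in\Delta_\Sigma$ ($x_B\in\Sigma_B$), $\mathbf{r}\in\Delta_\Sigma$ with positive entries: $\sum_{y}a^{x_A}_y b^{x_B}_y/r_y=K(x_A,x_B)$ for all $(x_A,x_B)$. The prior is well-defined if for any two solutions $(\{\mathbf{a}^{x_A}\},\{\mathbf{b}^{x_B}\},\mathbf{r})$ and $(\{\mathbf{c}^{x_A}\},\{\mathbf{d}^{x_B}\},\mathbf{r}')$ there is a permutation $\pi$ of $\Sigma$ with $\mathbf{r}=\pi\mathbf{r}'$, $\mathbf{a}^{x_A}=\pi\mathbf{c}^{x_A}$ and $\mathbf{b}^{x_B}=\pi\mathbf{d}^{x_B}$ for all $x_A,x_B$, where $\pi$ acts on vectors by permuting coordinates. *)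

theory Defs
  imports "HOL-Analysis.Analysis"
begin

text \<open>Finite alphabets are modelled as finite types 'a (Sigma_A), 'b (Sigma_B), 'c (Sigma).
  A joint law on Sigma_A x Sigma_B x Sigma is a function P :: 'a => 'b => 'c => real
  (P xa xb y = Pr[X_A = xa, X_B = xb, Y = y]).\<close>

definition prob_vec :: "('c::finite \<Rightarrow> real) \<Rightarrow> bool" where
  "prob_vec v \<longleftrightarrow> (\<forall>y. 0 \<le> v y) \<and> (\<Sum>y\<in>UNIV. v y) = 1"

definition pos_prob_vec :: "('c::finite \<Rightarrow> real) \<Rightarrow> bool" where
  "pos_prob_vec v \<longleftrightarrow> prob_vec v \<and> (\<forall>y. 0 < v y)"

definition joint_dist :: "('a::finite \<Rightarrow> 'b::finite \<Rightarrow> 'c::finite \<Rightarrow> real) \<Rightarrow> bool" where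
  "joint_dist P \<longleftrightarrow> (\<forall>xa xb y. 0 \<le> P xa xb y) \<and> (\<Sum>xa\<in>UNIV. \<Sum>xb\<in>UNIV. \<Sum>y\<in>UNIV. P xa xb y) = 1"

definition margA :: "('a::finite \<Rightarrow> 'b::finite \<Rightarrow> 'c::finite \<Rightarrow> real) \<Rightarrow> 'a \<Rightarrow> real" where
  "margA P xa = (\<Sum>xb\<in>UNIV. \<Sum>y\<in>UNIV. P xa xb y)"
definition margB :: "('a::finite \<Rightarrow> 'b::finite \<Rightarrow> 'c::finite \<Rightarrow> real) \<Rightarrow> 'b \<Rightarrow> real" where
  "margB P xb = (\<Sum>xa\<in>UNIV. \<Sum>y\<in>UNIV. P xa xb y)"
definition margY :: "('a::finite \<Rightarrow> 'b::finite \<Rightarrow> 'c::finite \<Rightarrow> real) \<Rightarrow> 'c \<Rightarrow> real" where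
  "margY P y = (\<Sum>xa\<in>UNIV. \<Sum>xb\<in>UNIV. P xa xb y)"
definition margAB :: "('a::finite \<Rightarrow> 'b::finite \<Rightarrow> 'c::finite \<Rightarrow> real) \<Rightarrow> 'a \<Rightarrow> 'b \<Rightarrow> real" where
  "margAB P xa xb = (\<Sum>y\<in>UNIV. P xa xb y)"
definition margAY :: "('a::finite \<Rightarrow> 'b::finite \<Rightarrow> 'c::finite \<Rightarrow> real) \<Rightarrow> 'a \<Rightarrow> 'c \<Rightarrow> real" where
  "margAY P xa y = (\<Sum>xb\<in>UNIV. P xa xb y)"
definition margBY :: "('a::finite \<Rightarrow> 'b::finite \<Rightarrow> 'c::finite \<Rightarrow> real) \<Rightarrow> 'b \<Rightarrow> 'c \<Rightarrow> real" where
  "margBY P xb y = (\<Sum>xa\<in>UNIV. P xa xb y)"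

definition cond_indep :: "('a::finite \<Rightarrow> 'b::finite \<Rightarrow> 'c::finite \<Rightarrow> real) \<Rightarrow> bool" where
  "cond_indep P \<longleftrightarrow> (\<forall>xa xb y. P xa xb y * margY P y = margAY P xa y * margBY P xb y)"

definition Kmat :: "('a::finite \<Rightarrow> 'b::finite \<Rightarrow> 'c::finite \<Rightarrow> real) \<Rightarrow> 'a \<Rightarrow> 'b \<Rightarrow> real" where
  "Kmat P xa xb = margAB P xa xb / (margA P xa * margB P xb)"

definition fconj :: "(real \<Rightarrow> real) \<Rightarrow> real \<Rightarrow> real" where
  "fconj f u = (SUP t\<in>{0..}. t * u - f t)"

definition subgrad :: "(real \<Rightarrow> real) \<Rightarrow> real \<Rightarrow> real \<Rightarrow> bool" where
  "subgrad f t c \<longleftrightarrow> (\<forall>s\<ge>0. f t + c * (s - t) \<le> f s)"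

definition Rf :: "(real \<Rightarrow> real) \<Rightarrow> ('c::finite \<Rightarrow> real) \<Rightarrow> ('c \<Rightarrow> real) \<Rightarrow> ('c \<Rightarrow> real) \<Rightarrow> real" where
  "Rf g p1 p2 p = g (\<Sum>y\<in>UNIV. p1 y * p2 y / p y)"

definition MIG :: "(real \<Rightarrow> real) \<Rightarrow> (real \<Rightarrow> real) \<Rightarrow> ('a::finite \<Rightarrow> 'b::finite \<Rightarrow> 'c::finite \<Rightarrow> real)
    \<Rightarrow> ('a \<Rightarrow> 'c \<Rightarrow> real) \<Rightarrow> ('b \<Rightarrow> 'c \<Rightarrow> real) \<Rightarrow> ('c \<Rightarrow> real) \<Rightarrow> real" where
  "MIG f g P hA hB p =
     (\<Sum>xa\<in>UNIV. \<Sum>xb\<in>UNIV. margAB P xa xb * Rf g (hA xa) (hB xb) p)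
   - (\<Sum>xa\<in>UNIV. \<Sum>xb\<in>UNIV. margA P xa * margB P xb * fconj f (Rf g (hA xa) (hB xb) p))"

definition MIf :: "(real \<Rightarrow> real) \<Rightarrow> ('a::finite \<Rightarrow> 'b::finite \<Rightarrow> 'c::finite \<Rightarrow> real) \<Rightarrow> real" where
  "MIf f P = (\<Sum>xa\<in>UNIV. \<Sum>xb\<in>UNIV. margA P xa * margB P xb * f (Kmat P xa xb))"

definition admissible :: "('a::finite \<Rightarrow> 'c::finite \<Rightarrow> real) \<Rightarrow> ('b::finite \<Rightarrow> 'c \<Rightarrow> real) \<Rightarrow> ('c \<Rightarrow> real) \<Rightarrow> bool" where
  "admissible hA hB p \<longleftrightarrow> (\<forall>xa. prob_vec (hA xa)) \<and> (\<forall>xb. prob_vec (hB xb)) \<and> pos_prob_vec p"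

definition is_maximizer :: "(real \<Rightarrow> real) \<Rightarrow> (real \<Rightarrow> real) \<Rightarrow> ('a::finite \<Rightarrow> 'b::finite \<Rightarrow> 'c::finite \<Rightarrow> real)
    \<Rightarrow> ('a \<Rightarrow> 'c \<Rightarrow> real) \<Rightarrow> ('b \<Rightarrow> 'c \<Rightarrow> real) \<Rightarrow> ('c \<Rightarrow> real) \<Rightarrow> bool" where
  "is_maximizer f g P hA hB p \<longleftrightarrow> admissible hA hB p \<and>
     (\<forall>hA' hB' p'. admissible hA' hB' p' \<longrightarrow> MIG f g P hA' hB' p' \<le> MIG f g P hA hB p)"

text \<open>Well-defined prior. A permutation pi acts on vectors by (pi v) y = v (pi y).\<close>
definition solves_system :: "('a::finite \<Rightarrow> 'b::finite \<Rightarrow> 'c::finite \<Rightarrow> real)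
    \<Rightarrow> ('a \<Rightarrow> 'c \<Rightarrow> real) \<Rightarrow> ('b \<Rightarrow> 'c \<Rightarrow> real) \<Rightarrow> ('c \<Rightarrow> real) \<Rightarrow> bool" where
  "solves_system P a b r \<longleftrightarrow> (\<forall>xa. prob_vec (a xa)) \<and> (\<forall>xb. prob_vec (b xb)) \<and> pos_prob_vec r \<and>
     (\<forall>xa xb. (\<Sum>y\<in>UNIV. a xa y * b xb y / r y) = Kmat P xa xb)"

definition well_defined_prior :: "('a::finite \<Rightarrow> 'b::finite \<Rightarrow> 'c::finite \<Rightarrow> real) \<Rightarrow> bool" where
  "well_defined_prior P \<longleftrightarrow> (\<forall>a b r c d r'. solves_system P a b r \<and> solves_system P c d r' \<longrightarrow>
     (\<exists>\<pi>::'c \<Rightarrow> 'c. bij \<pi> \<and> (\<forall>y. r y = r' (\<pi> y)) \<and> (\<forall>xa y. a xa y = c xa (\<pi> y))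
        \<and> (\<forall>xb y. b xb y = d xb (\<pi> y))))"

end

theory Submission
  imports Defs
begin

text \<open>For an admissible triple let s(xa,xb) = \<Sum>y hA(xa,y) hB(xb,y) / p(y). Since g is a subgradient
  selection, Fenchel-Young holds with equality at g(s), and MI^f - MIG becomes the weighted sum of the
  Bregman gaps f(K) - f(s) - g(s)(K - s) \<ge> 0. So MIG \<le> MI^f, with equality iff s = K everywhere
  (the gap vanishes only at s = K once g is injective). Posteriors of any Z making X_A, X_B
  conditionally independent give s = K, hence are maximizers; conversely a maximizer solves the
  system s = K, and well-definedness of the prior identifies it with the ground truth up to a
  relabelling. Convexity of f and the derivative hypothesis enter only through the subgradient
  selection g.\<close>

definition bregman :: "(real \<Rightarrow> real) \<Rightarrow> (real \<Rightarrow> real) \<Rightarrow> real \<Rightarrow> real \<Rightarrow> real" where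
  "bregman f g t s = f t - f s - g s * (t - s)"

lemma fconj_subgrad_eq:
  assumes sel: "\<forall>t\<ge>0. subgrad f t (g t)" and s: "s \<ge> 0"
  shows "fconj f (g s) = s * g s - f s"
  unfolding fconj_def
proof (rule cSup_eq_maximum)
  show "s * g s - f s \<in> (\<lambda>t. t * g s - f t) ` {0..}" using s by auto
next
  fix x assume "x \<in> (\<lambda>t. t * g s - f t) ` {0..}"
  then obtain t where "t \<ge> 0" "x = t * g s - f t" by auto
  moreover have "f s + g s * (t - s) \<le> f t" using sel s \<open>t \<ge> 0\<close> unfolding subgrad_def by auto
  ultimately show "x \<le> s * g s - f s" by (simp add: algebra_simps)
qed

lemma bregman_nonneg:
  assumes "\<forall>t\<ge>0. subgrad f t (g t)" "s \<ge> 0" "t \<ge> 0"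
  shows "bregman f g t s \<ge> 0"
  using assms unfolding subgrad_def bregman_def by force

lemma bregman_eq_0_imp_eq:
  assumes sel: "\<forall>t\<ge>0. subgrad f t (g t)" and inj: "inj_on g {0..}"
    and s: "s \<ge> 0" and t: "t \<ge> 0" and zero: "bregman f g t s = 0"
  shows "s = t"
proof (rule ccontr)
  assume ne: "s \<noteq> t"
  define m where "m = (s + t) / 2"
  have m: "m \<ge> 0" using s t by (simp add: m_def)
  have "f s + g s * (m - s) \<le> f m" "f m + g m * (s - m) \<le> f s" "f m + g m * (t - m) \<le> f t"
    using sel s t m unfolding subgrad_def by auto
  \<comment> \<open>The three subgradient inequalities at the midpoint, together with the vanishing gap, force
      the supporting slopes at s and m to coincide.\<close>
  with zero have "(g m - g s) * (t - s) = 0"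
    unfolding bregman_def m_def by (simp add: field_simps)
  with ne have "g m = g s" by simp
  with inj m s have "m = s" by (auto dest: inj_onD)
  with ne show False by (simp add: m_def)
qed

definition agreement :: "('a \<Rightarrow> 'c::finite \<Rightarrow> real) \<Rightarrow> ('b \<Rightarrow> 'c \<Rightarrow> real) \<Rightarrow> ('c \<Rightarrow> real) \<Rightarrow> 'a \<Rightarrow> 'b \<Rightarrow> real" where
  "agreement hA hB p xa xb = (\<Sum>y\<in>UNIV. hA xa y * hB xb y / p y)"

lemma agreement_nonneg:
  assumes "admissible hA hB p" shows "agreement hA hB p xa xb \<ge> 0"
  using assms unfolding agreement_def admissible_def prob_vec_def pos_prob_vec_def
  by (intro sum_nonneg) (auto intro!: divide_nonneg_pos)

lemma Kmat_nonneg: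
  assumes "joint_dist P" "0 < margA P xa" "0 < margB P xb"
  shows "Kmat P xa xb \<ge> 0"
  using assms unfolding Kmat_def margAB_def joint_dist_def by (auto intro!: divide_nonneg_pos sum_nonneg)

lemma MIf_minus_MIG:
  assumes sel: "\<forall>t\<ge>0. subgrad f t (g t)"
    and posA: "\<forall>xa. 0 < margA P xa" and posB: "\<forall>xb. 0 < margB P xb"
    and adm: "admissible hA hB p"
  shows "MIf f P - MIG f g P hA hB p = (\<Sum>xa\<in>UNIV. \<Sum>xb\<in>UNIV.
           margA P xa * margB P xb * bregman f g (Kmat P xa xb) (agreement hA hB p xa xb))"
  unfolding MIf_def MIG_def sum_subtractf[symmetric]
proof (intro sum.cong refl)
  fix xa xb
  have "Rf g (hA xa) (hB xb) p = g (agreement hA hB p xa xb)" by (simp add: Rf_def agreement_def)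
  moreover have "margAB P xa xb = margA P xa * margB P xb * Kmat P xa xb"
    using posA[rule_format, of xa] posB[rule_format, of xb] by (simp add: Kmat_def)
  ultimately show "margA P xa * margB P xb * f (Kmat P xa xb)
      - (margAB P xa xb * Rf g (hA xa) (hB xb) p - margA P xa * margB P xb * fconj f (Rf g (hA xa) (hB xb) p))
    = margA P xa * margB P xb * bregman f g (Kmat P xa xb) (agreement hA hB p xa xb)"
    by (simp add: fconj_subgrad_eq[OF sel agreement_nonneg[OF adm]] bregman_def algebra_simps)
qed

lemma MIG_le_MIf:
  assumes "joint_dist P" "\<forall>t\<ge>0. subgrad f t (g t)"
    and "\<forall>xa. 0 < margA P xa" "\<forall>xb. 0 < margB P xb" "admissible hA hB p"
  shows "MIG f g P hA hB p \<le> MIf f P"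
proof -
  have "0 \<le> MIf f P - MIG f g P hA hB p"
    using assms unfolding MIf_minus_MIG[OF assms(2-5)]
    by (intro sum_nonneg mult_nonneg_nonneg bregman_nonneg Kmat_nonneg agreement_nonneg)
       (auto intro: less_imp_le)
  then show ?thesis by simp
qed

lemma MIG_eq_MIf_imp_agreement_eq_Kmat:
  assumes prior: "joint_dist P" and sel: "\<forall>t\<ge>0. subgrad f t (g t)" and inj: "inj_on g {0..}"
    and posA: "\<forall>xa. 0 < margA P xa" and posB: "\<forall>xb. 0 < margB P xb"
    and adm: "admissible hA hB p" and eq: "MIG f g P hA hB p = MIf f P"
  shows "agreement hA hB p xa xb = Kmat P xa xb"
proof -
  let ?term = "\<lambda>xa xb. margA P xa * margB P xb * bregman f g (Kmat P xa xb) (agreement hA hB p xa xb)"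
  have nonneg: "0 \<le> ?term xa xb" for xa xb
    using prior posA posB
    by (intro mult_nonneg_nonneg bregman_nonneg[OF sel] Kmat_nonneg agreement_nonneg[OF adm])
       (auto intro: less_imp_le)
  have "(\<Sum>xa\<in>UNIV. \<Sum>xb\<in>UNIV. ?term xa xb) = 0"
    using eq MIf_minus_MIG[OF sel posA posB adm] by simp
  then have "bregman f g (Kmat P xa xb) (agreement hA hB p xa xb) = 0"
    using nonneg posA posB by (simp add: sum_nonneg sum_nonneg_eq_0_iff less_imp_neq[symmetric])
  moreover have "Kmat P xa xb \<ge> 0" using prior posA posB by (simp add: Kmat_nonneg)
  ultimately show ?thesis using bregman_eq_0_imp_eq[OF sel inj agreement_nonneg[OF adm]] by blast
qed

abbreviation postA :: "('a::finite \<Rightarrow> 'b::finite \<Rightarrow> 'c::finite \<Rightarrow> real) \<Rightarrow> 'a \<Rightarrow> 'c \<Rightarrow> real" where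
  "postA Q \<equiv> \<lambda>xa z. margAY Q xa z / margA Q xa"

abbreviation postB :: "('a::finite \<Rightarrow> 'b::finite \<Rightarrow> 'c::finite \<Rightarrow> real) \<Rightarrow> 'b \<Rightarrow> 'c \<Rightarrow> real" where
  "postB Q \<equiv> \<lambda>xb z. margBY Q xb z / margB Q xb"

lemma sum_margAY: "(\<Sum>z\<in>UNIV. margAY Q xa z) = margA Q xa"
  unfolding margAY_def margA_def by (rule sum.swap)

lemma sum_margBY: "(\<Sum>z\<in>UNIV. margBY Q xb z) = margB Q xb"
  unfolding margBY_def margB_def by (rule sum.swap)

lemma sum_margY: "(\<Sum>z\<in>UNIV. margY Q z) = (\<Sum>xa\<in>UNIV. \<Sum>xb\<in>UNIV. margAB Q xa xb)"
proof -
  have "(\<Sum>z\<in>UNIV. margY Q z) = (\<Sum>xa\<in>UNIV. \<Sum>z\<in>UNIV. \<Sum>xb\<in>UNIV. Q xa xb z)"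
    unfolding margY_def by (rule sum.swap)
  also have "\<dots> = (\<Sum>xa\<in>UNIV. \<Sum>xb\<in>UNIV. margAB Q xa xb)"
    unfolding margAB_def by (intro sum.cong refl) (rule sum.swap)
  finally show ?thesis .
qed

lemma margA_eq_sum_margAB: "margA Q xa = (\<Sum>xb\<in>UNIV. margAB Q xa xb)"
  unfolding margA_def margAB_def ..

lemma margB_eq_sum_margAB: "margB Q xb = (\<Sum>xa\<in>UNIV. margAB Q xa xb)"
  unfolding margB_def margAB_def by simp

lemma admissible_posteriors:
  assumes nonneg: "\<forall>xa xb z. 0 \<le> Q xa xb z"
    and posA: "\<forall>xa. 0 < margA Q xa" and posB: "\<forall>xb. 0 < margB Q xb" and posY: "\<forall>z. 0 < margY Q z"
    and total: "(\<Sum>xa\<in>UNIV. \<Sum>xb\<in>UNIV. margAB Q xa xb) = 1"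
  shows "admissible (postA Q) (postB Q) (margY Q)"
proof -
  have "0 \<le> margAY Q xa z" "0 \<le> margBY Q xb z" for xa xb z
    using nonneg unfolding margAY_def margBY_def by (simp_all add: sum_nonneg)
  then show ?thesis
    using posA posB posY total
    unfolding admissible_def prob_vec_def pos_prob_vec_def
    by (auto simp: sum_divide_distrib[symmetric] sum_margAY sum_margBY sum_margY less_imp_le
                   less_imp_neq[symmetric])
qed

lemma agreement_posteriors:
  assumes posY: "\<forall>z. 0 < margY Q z" and ci: "cond_indep Q"
  shows "agreement (postA Q) (postB Q) (margY Q) xa xb = Kmat Q xa xb"
proof -
  have "agreement (postA Q) (postB Q) (margY Q) xa xb = (\<Sum>z\<in>UNIV. Q xa xb z / (margA Q xa * margB Q xb))"
    unfolding agreement_def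
  proof (intro sum.cong refl)
    fix z
    have "margAY Q xa z * margBY Q xb z = Q xa xb z * margY Q z"
      using ci unfolding cond_indep_def by simp
    with posY show "postA Q xa z * postB Q xb z / margY Q z = Q xa xb z / (margA Q xa * margB Q xb)"
      by (simp add: field_simps less_imp_neq[symmetric])
  qed
  also have "\<dots> = Kmat Q xa xb" unfolding Kmat_def margAB_def by (simp add: sum_divide_distrib)
  finally show ?thesis .
qed

lemma posteriors_maximize_MIG:
  fixes Q :: "'a::finite \<Rightarrow> 'b::finite \<Rightarrow> 'c::finite \<Rightarrow> real"
  assumes prior: "joint_dist P" and sel: "\<forall>t\<ge>0. subgrad f t (g t)"
    and posA: "\<forall>xa. 0 < margA P xa" and posB: "\<forall>xb. 0 < margB P xb"
    and nonneg: "\<forall>xa xb z. 0 \<le> Q xa xb z" and same: "\<forall>xa xb. margAB Q xa xb = margAB P xa xb"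
    and posY: "\<forall>z. 0 < margY Q z" and ci: "cond_indep Q"
  shows "is_maximizer f g P (postA Q) (postB Q) (margY Q)"
    and "MIG f g P (postA Q) (postB Q) (margY Q) = MIf f P"
proof -
  have A: "margA Q = margA P" and B: "margB Q = margB P"
    using same by (simp_all add: fun_eq_iff margA_eq_sum_margAB margB_eq_sum_margAB)
  have K: "Kmat Q = Kmat P"
    using same by (simp add: fun_eq_iff Kmat_def A B)
  have "(\<Sum>xa\<in>UNIV. \<Sum>xb\<in>UNIV. margAB Q xa xb) = 1"
    using prior same unfolding joint_dist_def margAB_def by simp
  then have adm: "admissible (postA Q) (postB Q) (margY Q)"
    using admissible_posteriors[OF nonneg] posA posB posY by (simp add: A B)
  have "MIf f P - MIG f g P (postA Q) (postB Q) (margY Q) = 0"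
    unfolding MIf_minus_MIG[OF sel posA posB adm] agreement_posteriors[OF posY ci] K
    by (simp add: bregman_def)
  then show eq: "MIG f g P (postA Q) (postB Q) (margY Q) = MIf f P" by simp
  show "is_maximizer f g P (postA Q) (postB Q) (margY Q)"
    unfolding is_maximizer_def eq using adm MIG_le_MIf[OF prior sel posA posB] by blast
qed

lemma maximizer_solves_system:
  assumes prior: "joint_dist P" and sel: "\<forall>t\<ge>0. subgrad f t (g t)" and inj: "inj_on g {0..}"
    and posA: "\<forall>xa. 0 < margA P xa" and posB: "\<forall>xb. 0 < margB P xb" and posY: "\<forall>y. 0 < margY P y"
    and ci: "cond_indep P" and max: "is_maximizer f g P hA hB p"
  shows "solves_system P hA hB p"
proof -
  have nonneg: "\<forall>xa xb z. 0 \<le> P xa xb z" using prior unfolding joint_dist_def by simp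
  note truth = posteriors_maximize_MIG[OF prior sel posA posB nonneg _ posY ci]
  have adm: "admissible hA hB p" using max unfolding is_maximizer_def by simp
  have "MIf f P \<le> MIG f g P hA hB p"
    using max truth unfolding is_maximizer_def by fastforce
  then have "MIG f g P hA hB p = MIf f P"
    using MIG_le_MIf[OF prior sel posA posB adm] by simp
  then show ?thesis
    using adm MIG_eq_MIf_imp_agreement_eq_Kmat[OF prior sel inj posA posB adm]
    unfolding solves_system_def admissible_def agreement_def by simp
qed

lemma posteriors_solve_system:
  assumes prior: "joint_dist P"
    and posA: "\<forall>xa. 0 < margA P xa" and posB: "\<forall>xb. 0 < margB P xb" and posY: "\<forall>y. 0 < margY P y"
    and ci: "cond_indep P"
  shows "solves_system P (postA P) (postB P) (margY P)"
  using admissible_posteriors[of P] agreement_posteriors[OF posY ci] prior posA posB posY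
  unfolding solves_system_def admissible_def agreement_def joint_dist_def margAB_def by simp

lemma bij_preimage_singleton:
  assumes "bij \<pi>" shows "{y'. \<pi> y' = y} = {inv \<pi> y}"
  using assms by (auto simp: bij_def surj_f_inv_f inv_f_f)

theorem mainTheorem4:
  fixes P :: "'a::finite \<Rightarrow> 'b::finite \<Rightarrow> 'c::finite \<Rightarrow> real"
    and f g :: "real \<Rightarrow> real"
  assumes prior: "joint_dist P"
    and posA: "\<forall>xa. 0 < margA P xa" and posB: "\<forall>xb. 0 < margB P xb" and posY: "\<forall>y. 0 < margY P y"
    and cvx: "convex_on {0..} f" and f1: "f 1 = 0"
    and sel: "\<forall>t\<ge>0. subgrad f t (g t)"
    and ci: "cond_indep P"
  shows
    "(\<forall>Q :: 'a \<Rightarrow> 'b \<Rightarrow> 'c \<Rightarrow> real.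
        (\<forall>xa xb z. 0 \<le> Q xa xb z) \<and> (\<forall>xa xb. margAB Q xa xb = margAB P xa xb) \<and>
        (\<forall>z. 0 < margY Q z) \<and> cond_indep Q \<longrightarrow>
        is_maximizer f g P (\<lambda>xa z. margAY Q xa z / margA Q xa) (\<lambda>xb z. margBY Q xb z / margB Q xb) (margY Q)
        \<and> MIG f g P (\<lambda>xa z. margAY Q xa z / margA Q xa) (\<lambda>xb z. margBY Q xb z / margB Q xb) (margY Q)
            = MIf f P)
     \<and>
     (well_defined_prior P \<and> (\<forall>t\<ge>0. (f has_real_derivative g t) (at t within {0..})) \<and> inj_on g {0..} \<longrightarrow>
       (\<forall>hA hB p. is_maximizer f g P hA hB p \<longrightarrow>
          (\<exists>\<pi>::'c \<Rightarrow> 'c. bij \<pi> \<and>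
             (\<forall>xa y. hA xa y = (\<Sum>y'\<in>{y'. \<pi> y' = y}. margAY P xa y') / margA P xa) \<and>
             (\<forall>xb y. hB xb y = (\<Sum>y'\<in>{y'. \<pi> y' = y}. margBY P xb y') / margB P xb) \<and>
             (\<forall>y. p y = (\<Sum>y'\<in>{y'. \<pi> y' = y}. margY P y')))))"
proof (intro conjI allI impI)
  fix Q :: "'a \<Rightarrow> 'b \<Rightarrow> 'c \<Rightarrow> real"
  assume "(\<forall>xa xb z. 0 \<le> Q xa xb z) \<and> (\<forall>xa xb. margAB Q xa xb = margAB P xa xb) \<and>
      (\<forall>z. 0 < margY Q z) \<and> cond_indep Q"
  then show "is_maximizer f g P (postA Q) (postB Q) (margY Q)"
    and "MIG f g P (postA Q) (postB Q) (margY Q) = MIf f P"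
    using posteriors_maximize_MIG[OF prior sel posA posB] by blast+
next
  fix hA hB p
  assume "well_defined_prior P \<and> (\<forall>t\<ge>0. (f has_real_derivative g t) (at t within {0..})) \<and> inj_on g {0..}"
    and max: "is_maximizer f g P hA hB p"
  then have wd: "well_defined_prior P" and inj: "inj_on g {0..}" by auto
  obtain \<pi> :: "'c \<Rightarrow> 'c" where "bij \<pi>" and "\<forall>y. margY P y = p (\<pi> y)"
    and "\<forall>xa y. postA P xa y = hA xa (\<pi> y)" and "\<forall>xb y. postB P xb y = hB xb (\<pi> y)"
    using wd posteriors_solve_system[OF prior posA posB posY ci]
      maximizer_solves_system[OF prior sel inj posA posB posY ci max]
    unfolding well_defined_prior_def by blast
  then show "\<exists>\<pi>::'c \<Rightarrow> 'c. bij \<pi> \<and>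
      (\<forall>xa y. hA xa y = (\<Sum>y'\<in>{y'. \<pi> y' = y}. margAY P xa y') / margA P xa) \<and>
      (\<forall>xb y. hB xb y = (\<Sum>y'\<in>{y'. \<pi> y' = y}. margBY P xb y') / margB P xb) \<and>
      (\<forall>y. p y = (\<Sum>y'\<in>{y'. \<pi> y' = y}. margY P y'))"
    by (intro exI[of _ \<pi>]) (simp add: bij_preimage_singleton bij_is_surj surj_f_inv_f)
qed

end
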